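(* Let $\alpha=(\alpha_1,\dots,\alpha_k)\in\mathbb N^k$ with $k\ge1$ and $\alpha_k>0$. Then for every $\beta\in\mathbb P^k$, $$Z\tbinom{\alpha}{\beta}=M_\alpha=\sum_{0<i_1<\cdots<i_k}x_{i_1}^{\alpha_1}\cdots x_{i_k}^{\alpha_k}.$$ In particular, $Z\binom{\alpha}{\beta}$ is independent of $\beta$.
   Context: $\mathbb P$ denotes the positive and $\mathbb N$ the nonnegative integers. Let $X=\{x_i:i\in\mathbb P\}$ be commuting indeterminates. GSym. $\mathrm{GSym}\subseteq\mathbb Q[[X]]$ is the $\mathbb Q$-span of the series $\widehat M_{\binom{\gamma}{\mu}}=\sum_{0<i_1<\cdots<i_m}i_1^{\mu_1}\cdots i_m^{\mu_m}x_{i_1}^{\gamma_1}\cdots x_{i_m}^{\gamma_m}$, for $\gamma\in\mathbb N^m$ with $m=0$ or $\gamma_m>0$, and $\mu\in\mathbb N^m$. Regularization. For $\alpha\in\mathbb N^k$ and $\beta\in\mathbb P^k$, $\phi\binom{\alpha}{\beta}\in\mathrm{GSym}[t][z^{-1},z]]$ is obtained from $$\sum_{0<i_1<\cdots<i_k}x_{i_1}^{\alpha_1}\cdots x_{i_k}^{\alpha_k}e^{(i_1+t)\beta_1z}\cdots e^{(i_k+t)\beta_kz}$$ as follows. The coefficient of each $X$-monomial converges absolutely for $t\ge0$, $\mathrm{Re}(z)<0$. It is expanded as a Laurent series in $z$ with coefficients in $\mathbb Q[t]$, and powers of $z,t$ are collected. Renormalization. Let $P$ be the projection onto the polar part in $z$,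 $P(\sum_{n\ge m}a_nz^n)=\sum_{n<0}a_nz^n$. For $k\ge1$ define recursively $$\phi_-\tbinom{\alpha}{\beta}=-P\Big(\phi\tbinom{\alpha}{\beta}+\sum_{i=1}^{k-1}\phi\tbinom{\alpha_1..\alpha_i}{\beta_1..\beta_i}\phi_-\tbinom{\alpha_{i+1}..\alpha_k}{\beta_{i+1}..\beta_k}\Big),$$ $$\phi_+\tbinom{\alpha}{\beta}=(\mathrm{id}-P)\Big(\phi\tbinom{\alpha}{\beta}+\sum_{i=1}^{k-1}\phi\tbinom{\alpha_1..\alpha_i}{\beta_1..\beta_i}\phi_-\tbinom{\alpha_{i+1}..\alpha_k}{\beta_{i+1}..\beta_k}\Big).$$ Then $Z\binom{\alpha}{\beta}:=\phi_+\binom{\alpha}{\beta}\big|_{z=0}\in\mathrm{GSym}[t]$. *)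

theory Defs
  imports "HOL-Analysis.Analysis" "HOL-Computational_Algebra.Formal_Laurent_Series"
          "HOL-Computational_Algebra.Polynomial" "HOL-Library.Poly_Mapping"
begin

text \<open>X-monomials: finitely supported exponent vectors;
  we use the natural number i itself as the index of x_i; only i > 0 occur).\<close>
type_synonym xmon = "nat \<Rightarrow>\<^sub>0 nat"

text \<open>Elements of Q[t]((z))[[X]], coefficientwise: each X-monomial gets a Laurent series
  in z with coefficients in Q[t].\<close>
type_synonym lser = "xmon \<Rightarrow> rat poly fls"

definition tuples :: "nat \<Rightarrow> nat list set" where
  "tuples k = {i. length i = k \<and> sorted_wrt (<) i \<and> (\<forall>j\<in>set i. 0 < j)}"

definition xmono :: "nat list \<Rightarrow> nat list \<Rightarrow> xmon" where
  "xmono i a = (\<Sum>j<length i. Poly_Mapping.single (i ! j) (a ! j))"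

definition lmult :: "lser \<Rightarrow> lser \<Rightarrow> lser" where
  "lmult F G = (\<lambda>m. \<Sum>(a, b) \<in> {(a, b). a + b = m}. F a * G b)"

definition eval_coeff :: "rat poly \<Rightarrow> real \<Rightarrow> complex" where
  "eval_coeff p t = poly (map_poly of_rat p) (complex_of_real t)"

definition fls_converges_to :: "rat poly fls \<Rightarrow> real \<Rightarrow> complex \<Rightarrow> complex \<Rightarrow> bool" where
  "fls_converges_to F t z w \<longleftrightarrow>
     (\<lambda>n::nat. eval_coeff (fls_nth F (int n + fls_subdegree F)) t * z powi (int n + fls_subdegree F))
       sums w"

definition phi_fun :: "nat list \<Rightarrow> nat list \<Rightarrow> xmon \<Rightarrow> real \<Rightarrow> complex \<Rightarrow> complex" where
  "phi_fun a b m t z =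
     infsum (\<lambda>i. exp (\<Sum>j<length i. (of_nat (i ! j) + complex_of_real t) * of_nat (b ! j) * z))
            {i \<in> tuples (length a). xmono i a = m}"

definition phi :: "nat list \<Rightarrow> nat list \<Rightarrow> lser" where
  "phi a b = (\<lambda>m. THE F. \<forall>t\<ge>0. \<exists>r>0. \<forall>z. 0 < cmod z \<and> cmod z < r \<and> Re z < 0 \<longrightarrow>
                  fls_converges_to F t z (phi_fun a b m t z))"

definition polar :: "rat poly fls \<Rightarrow> rat poly fls" where
  "polar F = F - fps_to_fls (fls_regpart F)"

definition regular :: "rat poly fls \<Rightarrow> rat poly fls" where
  "regular F = fps_to_fls (fls_regpart F)"

function phi_minus :: "nat list \<Rightarrow> nat list \<Rightarrow> lser" where
  "phi_minus a b = (\<lambda>m. - polar (phi a b m +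
      (\<Sum>i\<in>{1..<length a}. lmult (phi (take i a) (take i b)) (phi_minus (drop i a) (drop i b)) m)))"
  by pat_completeness auto
termination
  by (relation "Wellfounded.measure (\<lambda>(a, b). length a)") auto

definition phi_plus :: "nat list \<Rightarrow> nat list \<Rightarrow> lser" where
  "phi_plus a b = (\<lambda>m. regular (phi a b m +
      (\<Sum>i\<in>{1..<length a}. lmult (phi (take i a) (take i b)) (phi_minus (drop i a) (drop i b)) m)))"

definition Zren :: "nat list \<Rightarrow> nat list \<Rightarrow> xmon \<Rightarrow> rat poly" where
  "Zren a b = (\<lambda>m. fls_nth (phi_plus a b m) 0)"

definition Mqsym :: "nat list \<Rightarrow> xmon \<Rightarrow> rat poly" where
  "Mqsym a = (\<lambda>m. of_nat (card {i \<in> tuples (length a). xmono i a = m}))"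

end

theory Submission
  imports Defs "HOL-Complex_Analysis.Complex_Analysis"
begin

(* Since \<alpha>_k > 0, the largest index of a tuple contributing to the coefficient of an
   X-monomial m occurs in m, so only finitely many tuples contribute. That coefficient is
   therefore a finite sum of exponentials exp((c + B t) z), an entire function of z whose
   Taylor series has coefficients in Q[t]; by uniqueness of Laurent expansions it is the
   regularization, which thus has no polar part. Hence every \<phi>_- vanishes, \<phi>_+ = \<phi>, and
   the constant term counts the contributing tuples. *)

declare phi_minus.simps [simp del]

lemma eval_coeff_add: "eval_coeff (p + q) t = eval_coeff p t + eval_coeff q t"
proof -
  have "map_poly (of_rat :: rat \<Rightarrow> complex) (p + q) = map_poly of_rat p + map_poly of_rat q"
    by (intro poly_eqI) (simp add: coeff_map_poly of_rat_add)
  then show ?thesis by (simp add: eval_coeff_def)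
qed

lemma eval_coeff_diff: "eval_coeff (p - q) t = eval_coeff p t - eval_coeff q t"
proof -
  have "map_poly (of_rat :: rat \<Rightarrow> complex) (p - q) = map_poly of_rat p - map_poly of_rat q"
    by (intro poly_eqI) (simp add: coeff_map_poly of_rat_diff)
  then show ?thesis by (simp add: eval_coeff_def)
qed

lemma eval_coeff_mult: "eval_coeff (p * q) t = eval_coeff p t * eval_coeff q t"
proof -
  have "map_poly (of_rat :: rat \<Rightarrow> complex) (p * q) = map_poly of_rat p * map_poly of_rat q"
    by (intro poly_eqI) (simp add: coeff_map_poly coeff_mult of_rat_sum of_rat_mult)
  then show ?thesis by (simp add: eval_coeff_def)
qed

lemma eval_coeff_0 [simp]: "eval_coeff 0 t = 0"
  by (simp add: eval_coeff_def)

lemma eval_coeff_1 [simp]: "eval_coeff 1 t = 1"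
  by (simp add: eval_coeff_def)

lemma eval_coeff_power: "eval_coeff (p ^ n) t = eval_coeff p t ^ n"
  by (induction n) (simp_all add: eval_coeff_mult)

lemma eval_coeff_sum: "eval_coeff (sum f A) t = (\<Sum>x\<in>A. eval_coeff (f x) t)"
  by (induction A rule: infinite_finite_induct) (simp_all add: eval_coeff_add)

lemma eval_coeff_smult: "eval_coeff (smult c p) t = of_rat c * eval_coeff p t"
  by (simp add: eval_coeff_def map_poly_smult of_rat_mult)

lemma eval_coeff_linear: "eval_coeff [:c, d:] t = of_rat c + of_rat d * complex_of_real t"
  by (simp add: eval_coeff_def map_poly_pCons)

lemma rat_poly_eq_0_if_eval_coeff_nonneg_eq_0:
  assumes "\<And>t. t \<ge> 0 \<Longrightarrow> eval_coeff p t = 0"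
  shows "p = 0"
proof (rule ccontr)
  assume "p \<noteq> 0"
  define q where "q = map_poly (of_rat :: rat \<Rightarrow> complex) p"
  have "q \<noteq> 0"
    using \<open>p \<noteq> 0\<close> by (simp add: q_def map_poly_eq_0_iff)
  then have "finite {x. poly q x = 0}"
    by (rule poly_roots_finite)
  moreover have "complex_of_real ` {0..} \<subseteq> {x. poly q x = 0}"
    using assms by (auto simp: eval_coeff_def q_def)
  moreover have "infinite (complex_of_real ` {0::real..})"
    by (subst finite_image_iff) (auto simp: inj_on_def infinite_Ici)
  ultimately show False
    using finite_subset by blast
qed

lemma fls_converges_to_shift:
  assumes "D \<le> fls_subdegree F"
  shows "fls_converges_to F t z w \<longleftrightarrow>
    (\<lambda>n. eval_coeff (fls_nth F (int n + D)) t * z powi (int n + D)) sums w"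
proof -
  define k where "k = nat (fls_subdegree F - D)"
  define f where "f n = eval_coeff (fls_nth F (int n + D)) t * z powi (int n + D)" for n
  have "f n = 0" if "n < k" for n
    using that assms by (simp add: f_def k_def)
  have shifted: "(\<lambda>n. f (n + k)) = (\<lambda>n. eval_coeff (fls_nth F (int n + fls_subdegree F)) t *
      z powi (int n + fls_subdegree F))"
    using assms by (auto simp: f_def k_def algebra_simps)
  have "fls_converges_to F t z w \<longleftrightarrow> (\<lambda>n. f (n + k)) sums w"
    by (simp add: fls_converges_to_def shifted)
  also have "\<dots> \<longleftrightarrow> f sums w"
    by (rule sums_zero_iff_shift) fact
  finally show ?thesis
    by (simp only: f_def[abs_def])
qed

lemma fls_converges_to_diff:
  assumes "fls_converges_to F t z v" and "fls_converges_to G t z w"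
  shows "fls_converges_to (F - G) t z (v - w)"
proof (cases "F = G")
  case True
  with assms have "v = w"
    by (auto simp: fls_converges_to_def sums_iff)
  then show ?thesis
    using True by (simp add: fls_converges_to_def)
next
  case False
  define D where "D = min (fls_subdegree F) (fls_subdegree G)"
  have "D \<le> fls_subdegree F" "D \<le> fls_subdegree G"
    by (simp_all add: D_def)
  have "D \<le> fls_subdegree (F - G)"
    using False by (intro fls_subdegree_geI) (auto simp: D_def)
  moreover have "(\<lambda>n. eval_coeff (fls_nth F (int n + D)) t * z powi (int n + D) -
      eval_coeff (fls_nth G (int n + D)) t * z powi (int n + D)) sums (v - w)"
    using assms by (intro sums_diff)
      (simp_all add: fls_converges_to_shift[OF \<open>D \<le> fls_subdegree F\<close>, symmetric]
        fls_converges_to_shift[OF \<open>D \<le> fls_subdegree G\<close>, symmetric])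
  ultimately show ?thesis
    by (simp add: fls_converges_to_shift eval_coeff_diff algebra_simps)
qed

lemma powser_coeff_0_eq_0_if_sums_0_left:
  fixes a :: "nat \<Rightarrow> complex"
  assumes "r > 0" and sums_0: "\<And>s. 0 < s \<Longrightarrow> s < r \<Longrightarrow> (\<lambda>n. a n * complex_of_real (-s) ^ n) sums 0"
  shows "a 0 = 0"
proof -
  define f where "f x = suminf (\<lambda>n. a n * x ^ n)" for x :: complex
  have summable_at: "summable (\<lambda>n. a n * complex_of_real (-(r/2)) ^ n)"
    using sums_0[of "r/2"] \<open>r > 0\<close> by (simp add: sums_iff)
  have "(\<lambda>n. a n * x ^ n) sums f x" if "norm x < r/2" for x
    unfolding f_def using that \<open>r > 0\<close>
    by (intro summable_sums powser_inside[OF summable_at]) simp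
  then have "(f \<longlongrightarrow> a 0) (at 0)"
    using \<open>r > 0\<close> by (intro powser_limit_0[of "r/2"]) auto
  moreover have "filterlim (\<lambda>s. complex_of_real (-s)) (at 0) (at_right 0)"
    by (intro filterlim_atI tendsto_eq_intros) (auto simp: eventually_at_filter)
  ultimately have "((\<lambda>s. f (complex_of_real (-s))) \<longlongrightarrow> a 0) (at_right 0)"
    by (rule filterlim_compose)
  moreover have "eventually (\<lambda>s. f (complex_of_real (-s)) = 0) (at_right (0::real))"
    using eventually_at_right_real[OF \<open>r > 0\<close>]
    by eventually_elim (use sums_0 in \<open>auto simp: f_def sums_iff\<close>)
  ultimately have "((\<lambda>_. 0) \<longlongrightarrow> a 0) (at_right (0::real))"
    by (rule Lim_transform_eventually)
  then show ?thesis
    by (simp add: tendsto_const_iff)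
qed

definition left_laurent_expansion :: "rat poly fls \<Rightarrow> (real \<Rightarrow> complex \<Rightarrow> complex) \<Rightarrow> bool" where
  "left_laurent_expansion F g \<longleftrightarrow> (\<forall>t\<ge>0. \<exists>r>0. \<forall>z. 0 < cmod z \<and> cmod z < r \<and> Re z < 0 \<longrightarrow>
      fls_converges_to F t z (g t z))"

lemma phi_conv_left_laurent_expansion:
  "phi a b m = (THE F. left_laurent_expansion F (phi_fun a b m))"
  by (simp add: phi_def left_laurent_expansion_def)

(* The leading coefficient of F is a nonzero polynomial, so it does not vanish at some t \<ge> 0;
   for that t, the series in z starts with a nonzero constant yet sums to 0 near 0. *)
lemma left_laurent_expansion_0_imp_eq_0:
  assumes "left_laurent_expansion F (\<lambda>_ _. 0)"
  shows "F = 0"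
proof (rule ccontr)
  assume "F \<noteq> 0"
  define d where "d = fls_subdegree F"
  have "fls_nth F d \<noteq> 0"
    using \<open>F \<noteq> 0\<close> by (simp add: d_def)
  then obtain t where "t \<ge> 0" and lead: "eval_coeff (fls_nth F d) t \<noteq> 0"
    using rat_poly_eq_0_if_eval_coeff_nonneg_eq_0 by blast
  obtain r where "r > 0" and conv:
      "\<And>z. 0 < cmod z \<Longrightarrow> cmod z < r \<Longrightarrow> Re z < 0 \<Longrightarrow> fls_converges_to F t z 0"
    using assms \<open>t \<ge> 0\<close> unfolding left_laurent_expansion_def by blast
  define a where "a n = eval_coeff (fls_nth F (int n + d)) t" for n
  have "a 0 = 0"
  proof (rule powser_coeff_0_eq_0_if_sums_0_left[OF \<open>r > 0\<close>])
    fix s :: real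
    assume s: "0 < s" "s < r"
    define z where "z = complex_of_real (-s)"
    have "z \<noteq> 0" using s by (simp add: z_def)
    have "(\<lambda>n. a n * z powi (int n + d)) sums 0"
      using conv[of z] s by (simp add: z_def a_def d_def fls_converges_to_def)
    then have "(\<lambda>n. a n * z powi (int n + d) * z powi (-d)) sums 0"
      using sums_mult2[of _ 0 "z powi (-d)"] by simp
    moreover have "z powi (int n + d) * z powi (-d) = z ^ n" for n
      using \<open>z \<noteq> 0\<close> by (simp add: power_int_add[symmetric])
    ultimately show "(\<lambda>n. a n * complex_of_real (-s) ^ n) sums 0"
      by (simp add: mult.assoc z_def)
  qed
  with lead show False
    by (simp add: a_def)
qed

lemma left_laurent_expansion_unique:
  assumes "left_laurent_expansion F g" and "left_laurent_expansion G g"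
  shows "F = G"
proof -
  have "left_laurent_expansion (F - G) (\<lambda>_ _. 0)"
    unfolding left_laurent_expansion_def
  proof (intro allI impI)
    fix t :: real
    assume "t \<ge> 0"
    obtain r1 where "r1 > 0" and F:
        "\<And>z. 0 < cmod z \<Longrightarrow> cmod z < r1 \<Longrightarrow> Re z < 0 \<Longrightarrow> fls_converges_to F t z (g t z)"
      using assms(1) \<open>t \<ge> 0\<close> unfolding left_laurent_expansion_def by blast
    obtain r2 where "r2 > 0" and G:
        "\<And>z. 0 < cmod z \<Longrightarrow> cmod z < r2 \<Longrightarrow> Re z < 0 \<Longrightarrow> fls_converges_to G t z (g t z)"
      using assms(2) \<open>t \<ge> 0\<close> unfolding left_laurent_expansion_def by blast
    show "\<exists>r>0. \<forall>z. 0 < cmod z \<and> cmod z < r \<and> Re z < 0 \<longrightarrow> fls_converges_to (F - G) t z 0"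
    proof (intro exI[of _ "min r1 r2"] conjI allI impI)
      fix z
      assume "0 < cmod z \<and> cmod z < min r1 r2 \<and> Re z < 0"
      then show "fls_converges_to (F - G) t z 0"
        using fls_converges_to_diff[OF F G] by simp
    qed (simp add: \<open>r1 > 0\<close> \<open>r2 > 0\<close>)
  qed
  then have "F - G = 0"
    by (rule left_laurent_expansion_0_imp_eq_0)
  then show ?thesis
    by simp
qed

lemma phi_eqI:
  assumes "left_laurent_expansion F (phi_fun a b m)"
  shows "phi a b m = F"
  unfolding phi_conv_left_laurent_expansion
  using assms left_laurent_expansion_unique by blast

definition index_tuples :: "nat list \<Rightarrow> xmon \<Rightarrow> nat list set" where
  "index_tuples a m = {i \<in> tuples (length a). xmono i a = m}"

lemma lookup_xmono_ge:
  assumes "j < length i"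
  shows "a ! j \<le> Poly_Mapping.lookup (xmono i a) (i ! j)"
proof -
  have "Poly_Mapping.lookup (xmono i a) (i ! j) =
      (\<Sum>l<length i. Poly_Mapping.lookup (Poly_Mapping.single (i ! l) (a ! l)) (i ! j))"
    by (simp add: xmono_def lookup_sum)
  also have "\<dots> \<ge> Poly_Mapping.lookup (Poly_Mapping.single (i ! j) (a ! j)) (i ! j)"
    using assms by (intro member_le_sum) auto
  finally show ?thesis
    by simp
qed

lemma finite_index_tuples:
  assumes "a \<noteq> []" and "last a > 0"
  shows "finite (index_tuples a m)"
proof -
  define N where "N = Max (Poly_Mapping.keys m)"
  have "set i \<subseteq> {..N}" if "i \<in> index_tuples a m" for i
  proof
    fix x
    assume "x \<in> set i"
    from that have len: "length i = length a" and sorted: "sorted_wrt (<) i" and "xmono i a = m"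
      by (auto simp: index_tuples_def tuples_def)
    define l where "l = length a - 1"
    have "l < length i" and "a ! l > 0"
      using assms len by (simp_all add: l_def last_conv_nth)
    then have "Poly_Mapping.lookup m (i ! l) > 0"
      using lookup_xmono_ge[OF \<open>l < length i\<close>, of a] \<open>xmono i a = m\<close> by simp
    then have "i ! l \<le> N"
      by (simp add: N_def in_keys_iff)
    moreover obtain j where "j < length i" and "x = i ! j"
      using \<open>x \<in> set i\<close> by (auto simp: in_set_conv_nth)
    moreover have "i ! j \<le> i ! l"
      using sorted \<open>j < length i\<close> len
      by (cases "j = l") (auto simp: sorted_wrt_iff_nth_less l_def intro: less_imp_le)
    ultimately show "x \<in> {..N}"
      by simp
  qed
  then have "index_tuples a m \<subseteq> {i. set i \<subseteq> {..N} \<and> length i = length a}"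
    by (auto simp: index_tuples_def tuples_def)
  then show ?thesis
    by (rule finite_subset) (simp add: finite_lists_length_eq)
qed

definition exponent_poly :: "nat list \<Rightarrow> nat list \<Rightarrow> rat poly" where
  "exponent_poly b i = (\<Sum>j<length i. smult (of_nat (b ! j)) [:of_nat (i ! j), 1:])"

lemma eval_exponent_poly:
  "eval_coeff (exponent_poly b i) t * z =
     (\<Sum>j<length i. (of_nat (i ! j) + complex_of_real t) * of_nat (b ! j) * z)"
proof -
  have "eval_coeff (exponent_poly b i) t = (\<Sum>j<length i. of_nat (b ! j) * (of_nat (i ! j) + t))"
    by (simp add: exponent_poly_def eval_coeff_sum eval_coeff_smult eval_coeff_linear
        of_rat_mult distrib_left)
  then show ?thesis
    by (simp add: sum_distrib_left sum_distrib_right mult_ac)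
qed

definition exp_expansion :: "nat list \<Rightarrow> nat list \<Rightarrow> xmon \<Rightarrow> rat poly fps" where
  "exp_expansion a b m =
     Abs_fps (\<lambda>n. \<Sum>i\<in>index_tuples a m. smult (inverse (fact n)) (exponent_poly b i ^ n))"

lemma exp_sums_rat_coeffs:
  fixes w z :: complex
  shows "(\<lambda>n. of_rat (inverse (fact n)) * w ^ n * z ^ n) sums exp (w * z)"
proof -
  have "of_rat (inverse (fact n)) = (of_real (inverse (fact n)) :: complex)" for n
    by (metis of_real_fact of_real_inverse of_rat_inverse of_nat_fact of_rat_of_nat_eq)
  then have "(w * z) ^ n /\<^sub>R fact n = of_rat (inverse (fact n)) * w ^ n * z ^ n" for n
    by (simp add: scaleR_conv_of_real power_mult_distrib mult_ac)
  then show ?thesis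
    using exp_converges[of "w * z"] by simp
qed

lemma exp_expansion_converges:
  assumes "finite (index_tuples a m)"
  shows "fls_converges_to (fps_to_fls (exp_expansion a b m)) t z (phi_fun a b m t z)"
proof -
  let ?w = "\<lambda>i. eval_coeff (exponent_poly b i) t"
  have "phi_fun a b m t z = (\<Sum>i\<in>index_tuples a m. exp (?w i * z))"
    using assms by (simp add: phi_fun_def index_tuples_def eval_exponent_poly)
  moreover have "(\<lambda>n. \<Sum>i\<in>index_tuples a m. of_rat (inverse (fact n)) * ?w i ^ n * z ^ n)
      sums (\<Sum>i\<in>index_tuples a m. exp (?w i * z))"
    by (intro sums_sum exp_sums_rat_coeffs)
  ultimately show ?thesis
    by (simp add: fls_converges_to_shift[of 0] fls_subdegree_fls_to_fps exp_expansion_def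
        eval_coeff_sum eval_coeff_smult eval_coeff_power sum_distrib_right)
qed

lemma phi_eq_exp_expansion:
  assumes "finite (index_tuples a m)"
  shows "phi a b m = fps_to_fls (exp_expansion a b m)"
  using exp_expansion_converges[OF assms]
  by (intro phi_eqI) (auto simp: left_laurent_expansion_def intro: exI[of _ 1])

lemma renormalization_sum_eq_0:
  assumes "\<And>i. i \<in> {1..<length a} \<Longrightarrow> phi_minus (drop i a) (drop i b) = (\<lambda>_. 0)"
  shows "(\<Sum>i\<in>{1..<length a}. lmult (phi (take i a) (take i b)) (phi_minus (drop i a) (drop i b)) m) = 0"
  using assms by (intro sum.neutral) (simp add: lmult_def case_prod_beta)

lemma phi_minus_eq_0:
  assumes "a \<noteq> []" and "last a > 0"
  shows "phi_minus a b = (\<lambda>_. 0)"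
  using assms
proof (induction "length a" arbitrary: a b rule: less_induct)
  case less
  have "phi_minus (drop i a) (drop i b) = (\<lambda>_. 0)" if "i \<in> {1..<length a}" for i
    using that less by (intro less.hyps) (auto simp: last_drop)
  then have "phi_minus a b m = - polar (phi a b m)" for m
    by (subst phi_minus.simps) (simp only: renormalization_sum_eq_0 add_0_right)
  moreover have "polar (phi a b m) = 0" for m
    using less.prems by (simp add: phi_eq_exp_expansion finite_index_tuples polar_def)
  ultimately show ?case
    by (simp add: fun_eq_iff)
qed

lemma phi_plus_eq_phi:
  assumes "a \<noteq> []" and "last a > 0"
  shows "phi_plus a b = phi a b"
proof
  fix m
  have "phi_minus (drop i a) (drop i b) = (\<lambda>_. 0)" if "i \<in> {1..<length a}" for i
    using that assms by (intro phi_minus_eq_0) (auto simp: last_drop)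
  then have "phi_plus a b m = regular (phi a b m)"
    by (simp only: phi_plus_def renormalization_sum_eq_0 add_0_right)
  also have "\<dots> = phi a b m"
    using assms by (simp add: phi_eq_exp_expansion finite_index_tuples regular_def)
  finally show "phi_plus a b m = phi a b m" .
qed

theorem corollary4p5:
  fixes \<alpha> \<beta> :: "nat list"
  assumes "length \<alpha> \<ge> 1" and "last \<alpha> > 0"
    and "length \<beta> = length \<alpha>" and "\<forall>b\<in>set \<beta>. b > 0"
  shows "Zren \<alpha> \<beta> = Mqsym \<alpha>"
proof
  fix m
  have "\<alpha> \<noteq> []"
    using assms(1) by auto
  then have "phi_plus \<alpha> \<beta> m = fps_to_fls (exp_expansion \<alpha> \<beta> m)"
    using assms(2) by (simp add: phi_plus_eq_phi phi_eq_exp_expansion finite_index_tuples)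
  then show "Zren \<alpha> \<beta> m = Mqsym \<alpha> m"
    by (simp add: Zren_def Mqsym_def exp_expansion_def index_tuples_def)
qed

end
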